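(* As $\mu\to0$ and $|\mathcal{S}|\mu\to\eta\in[0,\infty)$, $$\big(M_x^{\mu,\mathcal{S}}\big)_{x\in\mathcal{T}\setminus\{\emptyset\}}\longrightarrow(M_x)_{x\in\mathcal{T}\setminus\{\emptyset\}}$$ in distribution (i.e. all finite-dimensional marginals converge), where the $M_x$ are i.i.d. Poisson$(\eta)$.
   Context: $\mathcal{T}=\bigcup_{l\ge0}\{0,1\}^l$ (binary words; $\emptyset$ the initial cell; $x\prec y$ iff $x$ is a proper prefix of $y$; $x0,x1$ the daughters of $x$). Genomes: $\mathcal{N}=\{A,C,G,T\}$, $\mathcal{S}$ a finite set of sites, $V^\mu(\emptyset)=u$, and given $V^\mu(x)=v$ the entries $V_i^\mu(xj)$ ($i\in\mathcal{S}$, $j\in\{0,1\}$) are independent with $\mathbb{P}[V_i^\mu(xj)=\psi]=\mu/3$ for $\psi\ne v_i$, $1-\mu$ for $\psi=v_i$, independently across divisions. Fix an enumeration $\mathcal{T}=(x_k)_{k\in\mathbb{N}}$ with $x_j\prec x_k\Rightarrow j<k$; $\phi_i^\mu$ is the first cell in the enumeration with $V_i^\mu(x)\ne u_i$; $M_x^{\mu,\mathcal{S}}=|\{i\in\mathcal{S}:\phi_i^\mu=x\}|$. *)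

theory Defs
  imports "HOL-Probability.Probability" "HOL-Library.Sublist"
begin

datatype nucleotide = A | C | G | T

text \<open>Cells are binary words (bool lists); the daughters of x are x @ [False], x @ [True];
  the mother of a non-root cell x is butlast x.\<close>

definition trans_prob :: "real \<Rightarrow> nucleotide \<Rightarrow> nucleotide \<Rightarrow> real" where
  "trans_prob \<mu> a b = (if a = b then 1 - \<mu> else \<mu> / 3)"

definition prefix_closed :: "bool list set \<Rightarrow> bool" where
  "prefix_closed F \<longleftrightarrow> (\<forall>x\<in>F. \<forall>y. prefix y x \<longrightarrow> y \<in> F)"

definition genome_process ::
  "'w measure \<Rightarrow> real \<Rightarrow> 's set \<Rightarrow> ('s \<Rightarrow> nucleotide)
     \<Rightarrow> (bool list \<Rightarrow> 'w \<Rightarrow> 's \<Rightarrow> nucleotide) \<Rightarrow> bool" where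
  "genome_process M \<mu> S u V \<longleftrightarrow>
     prob_space M \<and>
     (\<forall>x. \<forall>i\<in>S. (\<lambda>\<omega>. V x \<omega> i) \<in> measurable M (count_space UNIV)) \<and>
     (\<forall>F w. finite F \<and> [] \<in> F \<and> prefix_closed F \<longrightarrow>
        measure M {\<omega>\<in>space M. \<forall>x\<in>F. \<forall>i\<in>S. V x \<omega> i = w x i} =
          (if \<forall>i\<in>S. w [] i = u i then 1 else 0) *
          (\<Prod>x\<in>F - {[]}. \<Prod>i\<in>S. trans_prob \<mu> (w (butlast x) i) (w x i)))"

definition admissible_enum :: "(nat \<Rightarrow> bool list) \<Rightarrow> bool" where
  "admissible_enum e \<longleftrightarrow> bij e \<and> (\<forall>j k. strict_prefix (e j) (e k) \<longrightarrow> j < k)"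

definition first_mut ::
  "(nat \<Rightarrow> bool list) \<Rightarrow> (bool list \<Rightarrow> 'w \<Rightarrow> 's \<Rightarrow> nucleotide) \<Rightarrow> ('s \<Rightarrow> nucleotide)
     \<Rightarrow> 's \<Rightarrow> bool list \<Rightarrow> 'w \<Rightarrow> bool" where
  "first_mut e V u i x \<omega> \<longleftrightarrow>
     (\<exists>k. e k = x \<and> V x \<omega> i \<noteq> u i \<and> (\<forall>j<k. V (e j) \<omega> i = u i))"

definition mut_count ::
  "(nat \<Rightarrow> bool list) \<Rightarrow> 's set \<Rightarrow> (bool list \<Rightarrow> 'w \<Rightarrow> 's \<Rightarrow> nucleotide) \<Rightarrow> ('s \<Rightarrow> nucleotide)
     \<Rightarrow> bool list \<Rightarrow> 'w \<Rightarrow> nat" where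
  "mut_count e S V u x \<omega> = card {i\<in>S. first_mut e V u i x \<omega>}"

definition poisson_prob :: "real \<Rightarrow> nat \<Rightarrow> real" where
  "poisson_prob \<eta> k = exp (- \<eta>) * \<eta> ^ k / fact k"

end

theory Submission
  imports Defs
begin

text \<open>Relabel the cells through the admissible enumeration: cell \<open>j \<ge> 1\<close> then has a parent
  index smaller than \<open>j\<close>, so the cells \<open>0, \<dots>, k\<close> always form a subtree. A site therefore keeps
  its initial value on the first \<open>k + 1\<close> cells with probability \<open>(1 - \<mu>)^k\<close>, and its first
  mutation in enumeration order sits at cell \<open>j \<ge> 1\<close> with probability \<open>(1 - \<mu>)^(j-1) \<mu>\<close>.
  Sites evolve independently, so the counts \<open>M_x\<close>, \<open>x \<in> X\<close>, are multinomial with \<open>|S|\<close>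
  trials and these cell probabilities. Each cell probability is \<open>\<mu> + o(\<mu>)\<close>, so when
  \<open>|S| \<mu> \<rightarrow> \<eta>\<close> the multinomial law converges to a product of Poisson(\<eta>) laws.\<close>

section \<open>The multinomial distribution\<close>

text \<open>The probability that \<open>N\<close> independent trials, each landing in class \<open>j \<in> J\<close> with
  probability \<open>p j\<close> and outside \<open>J\<close> otherwise, hit every class \<open>j\<close> exactly \<open>m j\<close> times.
  The first factor is the falling factorial \<open>N!/(N - \<Sum>m)!\<close>; it vanishes when \<open>\<Sum>m > N\<close>,
  which makes the truncated exponent \<open>N - \<Sum>m\<close> harmless.\<close>
definition multinomial_prob :: "'j set \<Rightarrow> ('j \<Rightarrow> real) \<Rightarrow> nat \<Rightarrow> ('j \<Rightarrow> nat) \<Rightarrow> real" where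
  "multinomial_prob J p N m =
     (\<Prod>t<(\<Sum>j\<in>J. m j). real N - real t) * (\<Prod>j\<in>J. p j ^ m j / fact (m j)) *
     (1 - sum p J) ^ (N - (\<Sum>j\<in>J. m j))"

lemma falling_prod_eq_0:
  "N < M \<Longrightarrow> (\<Prod>t<M. real N - real t) = 0"
  by (rule prod_zero) (auto intro!: bexI[of _ N])

lemma multinomial_prob_0:
  assumes "finite J"
  shows "multinomial_prob J p 0 m = (if \<forall>j\<in>J. m j = 0 then 1 else 0)"
proof (cases "\<forall>j\<in>J. m j = 0")
  case False
  then have "(\<Sum>j\<in>J. m j) \<noteq> 0"
    using assms by auto
  then show ?thesis
    using False falling_prod_eq_0[of 0] by (simp add: multinomial_prob_def)
qed (simp add: multinomial_prob_def)

lemma Suc_sum_fun_upd: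
  assumes "finite J" "j \<in> J" "m j = Suc k"
  shows "Suc (\<Sum>i\<in>J. (m(j := k)) i) = (\<Sum>i\<in>J. m i)"
proof -
  have "(\<Sum>i\<in>J. (m(j := k)) i) = k + (\<Sum>i\<in>J - {j}. m i)"
    using assms by (simp add: sum.remove)
  moreover have "(\<Sum>i\<in>J. m i) = m j + (\<Sum>i\<in>J - {j}. m i)"
    using assms by (simp add: sum.remove)
  ultimately show ?thesis
    using assms(3) by simp
qed

lemma prod_power_div_fact_fun_upd:
  fixes p :: "'j \<Rightarrow> real"
  assumes "finite J" "j \<in> J" "m j = Suc k"
  shows "p j * (\<Prod>i\<in>J. p i ^ (m(j := k)) i / fact ((m(j := k)) i))
       = real (m j) * (\<Prod>i\<in>J. p i ^ m i / fact (m i))"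
proof -
  define R where "R = (\<Prod>i\<in>J - {j}. p i ^ m i / fact (m i))"
  have upd: "(\<Prod>i\<in>J. p i ^ (m(j := k)) i / fact ((m(j := k)) i)) = p j ^ k / fact k * R"
    unfolding R_def using assms by (simp add: prod.remove)
  have full: "(\<Prod>i\<in>J. p i ^ m i / fact (m i)) = p j ^ m j / fact (m j) * R"
    unfolding R_def using assms by (simp add: prod.remove)
  show ?thesis
    unfolding upd full assms(3) by (simp add: divide_simps)
qed

lemma mult_multinomial_prob_fun_upd:
  assumes "finite J" "j \<in> J" "m j = Suc k" "(\<Sum>i\<in>J. m i) = Suc M"
  shows "p j * multinomial_prob J p N (m(j := k)) =
     real (m j) * ((\<Prod>t<M. real N - real t) * (\<Prod>i\<in>J. p i ^ m i / fact (m i)) * (1 - sum p J) ^ (N - M))"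
proof -
  have sum_upd: "(\<Sum>i\<in>J. (m(j := k)) i) = M"
    using Suc_sum_fun_upd[of J j m, OF assms(1-3)] assms(4) by simp
  have "p j * multinomial_prob J p N (m(j := k)) = (\<Prod>t<M. real N - real t) *
      (p j * (\<Prod>i\<in>J. p i ^ (m(j := k)) i / fact ((m(j := k)) i))) * (1 - sum p J) ^ (N - M)"
    unfolding multinomial_prob_def sum_upd by (simp add: ac_simps del: fun_upd_apply)
  then show ?thesis
    unfolding prod_power_div_fact_fun_upd[of J j m k p, OF assms(1-3)] by (simp add: ac_simps)
qed

lemma mult_multinomial_prob_miss:
  assumes "(\<Sum>j\<in>J. m j) = Suc M"
  shows "(1 - sum p J) * multinomial_prob J p N m =
     (real N - real M) * ((\<Prod>t<M. real N - real t) * (\<Prod>j\<in>J. p j ^ m j / fact (m j)) * (1 - sum p J) ^ (N - M))"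
proof (cases "M < N")
  case True
  define r where "r = 1 - sum p J"
  have "r * r ^ (N - Suc M) = r ^ (N - M)"
    using True by (simp flip: power_Suc add: Suc_diff_Suc)
  then show ?thesis
    unfolding multinomial_prob_def assms r_def[symmetric] by (simp add: ac_simps)
next
  case False
  then have falling0: "(\<Prod>t<Suc M. real N - real t) = 0"
    by (intro falling_prod_eq_0) simp
  have "(real N - real M) * (\<Prod>t<M. real N - real t) = 0"
    using False falling_prod_eq_0[of N M] by (cases "N = M") auto
  then show ?thesis
    unfolding multinomial_prob_def assms falling0 by auto
qed

lemma multinomial_prob_Suc_trials:
  assumes "(\<Sum>j\<in>J. m j) = Suc M"
  shows "multinomial_prob J p (Suc N) m =
     real (Suc N) * ((\<Prod>t<M. real N - real t) * (\<Prod>j\<in>J. p j ^ m j / fact (m j)) * (1 - sum p J) ^ (N - M))"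
  unfolding multinomial_prob_def assms by (simp add: prod.lessThan_Suc_shift del: prod.lessThan_Suc)

lemma multinomial_prob_Suc:
  assumes J: "finite J"
  shows "multinomial_prob J p (Suc N) m =
     (1 - sum p J) * multinomial_prob J p N m +
     (\<Sum>j\<in>J. if m j = 0 then 0 else p j * multinomial_prob J p N (m(j := m j - 1)))"
proof (cases "\<Sum>j\<in>J. m j")
  case 0
  then show ?thesis
    using J by (simp add: multinomial_prob_def)
next
  case (Suc M)
  define X where "X = (\<Prod>t<M. real N - real t) * (\<Prod>j\<in>J. p j ^ m j / fact (m j)) * (1 - sum p J) ^ (N - M)"
  have "(if m j = 0 then 0 else p j * multinomial_prob J p N (m(j := m j - 1))) = real (m j) * X"
    if "j \<in> J" for j
    using mult_multinomial_prob_fun_upd[OF J that _ Suc, where p = p and N = N] unfolding X_def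
    by (cases "m j") auto
  then have "(\<Sum>j\<in>J. if m j = 0 then 0 else p j * multinomial_prob J p N (m(j := m j - 1)))
      = real (Suc M) * X"
    using Suc by (simp flip: sum_distrib_right of_nat_sum)
  then show ?thesis
    using mult_multinomial_prob_miss[OF Suc, of p N] multinomial_prob_Suc_trials[OF Suc, of p N]
    unfolding X_def by (simp add: algebra_simps)
qed

lemma sum_PiE_insert:
  assumes "x \<notin> S"
  shows "(\<Sum>g\<in>PiE (insert x S) B. f g) = (\<Sum>y\<in>B x. \<Sum>g\<in>PiE S B. f (g(x := y)))"
proof -
  have "(\<Sum>g\<in>PiE (insert x S) B. f g) = (\<Sum>(y, g)\<in>B x \<times> PiE S B. f (g(x := y)))"
    unfolding PiE_insert_eq by (subst sum.reindex[OF inj_combinator[OF assms]]) (simp add: case_prod_beta)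
  then show ?thesis
    by (simp add: sum.cartesian_product)
qed

lemma sum_split_by_unique_class:
  assumes "finite Y" "finite J" and unique: "\<And>a j j'. R a j \<Longrightarrow> R a j' \<Longrightarrow> j = j'"
  shows "(\<Sum>a\<in>Y. f a) = (\<Sum>a\<in>{a\<in>Y. \<forall>j\<in>J. \<not> R a j}. f a) + (\<Sum>j\<in>J. \<Sum>a\<in>{a\<in>Y. R a j}. f a)"
proof -
  have "f a = (if \<forall>j\<in>J. \<not> R a j then f a else 0) + (\<Sum>j\<in>J. if R a j then f a else 0)" for a
  proof (cases "\<forall>j\<in>J. \<not> R a j")
    case False
    then obtain j0 where "j0 \<in> J" "R a j0"
      by blast
    then have "R a j \<longleftrightarrow> j = j0" for j
      using unique by blast
    then have "(\<Sum>j\<in>J. if R a j then f a else 0) = (\<Sum>j\<in>J. if j = j0 then f a else 0)"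
      by simp
    then show ?thesis
      using False \<open>j0 \<in> J\<close> assms(2) by auto
  qed simp
  then have "(\<Sum>a\<in>Y. f a) = (\<Sum>a\<in>Y. if \<forall>j\<in>J. \<not> R a j then f a else 0) + (\<Sum>j\<in>J. \<Sum>a\<in>Y. if R a j then f a else 0)"
    by (subst sum.swap) (simp flip: sum.distrib)
  then show ?thesis
    using assms(1) by (simp add: sum.inter_filter)
qed

lemma sum_PiE_insert_class_counts:
  fixes q :: "'i \<Rightarrow> 'a \<Rightarrow> real" and R :: "'i \<Rightarrow> 'a \<Rightarrow> 'j \<Rightarrow> bool"
  assumes "finite S" "i0 \<notin> S" "finite Y"
  shows "(\<Sum>g\<in>{g\<in>PiE (insert i0 S) (\<lambda>_. Y). \<forall>j\<in>J. card {i\<in>insert i0 S. R i (g i) j} = m j}.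
            \<Prod>i\<in>insert i0 S. q i (g i))
       = (\<Sum>a\<in>Y. q i0 a * (\<Sum>g\<in>PiE S (\<lambda>_. Y).
            if \<forall>j\<in>J. card {i\<in>S. R i (g i) j} + (if R i0 a j then 1 else 0) = m j
            then \<Prod>i\<in>S. q i (g i) else 0))"
proof -
  have card_upd: "card {i\<in>insert i0 S. R i ((g(i0 := a)) i) j} = card {i\<in>S. R i (g i) j} + (if R i0 a j then 1 else 0)"
    for g a j
  proof -
    have "{i\<in>insert i0 S. R i ((g(i0 := a)) i) j} =
        (if R i0 a j then insert i0 {i\<in>S. R i (g i) j} else {i\<in>S. R i (g i) j})"
      using assms(2) by auto
    then show ?thesis
      using assms(1,2) by simp
  qed
  have prod_upd: "(\<Prod>i\<in>insert i0 S. q i ((g(i0 := a)) i)) = q i0 a * (\<Prod>i\<in>S. q i (g i))" for g a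
    using assms(1,2) by (auto intro!: prod.cong)
  have "(\<Sum>g\<in>{g\<in>PiE (insert i0 S) (\<lambda>_. Y). \<forall>j\<in>J. card {i\<in>insert i0 S. R i (g i) j} = m j}.
        \<Prod>i\<in>insert i0 S. q i (g i)) = (\<Sum>g\<in>PiE (insert i0 S) (\<lambda>_. Y).
        if \<forall>j\<in>J. card {i\<in>insert i0 S. R i (g i) j} = m j then \<Prod>i\<in>insert i0 S. q i (g i) else 0)"
    using assms(1,3) by (intro sum.inter_filter finite_PiE) auto
  also have "\<dots> = (\<Sum>a\<in>Y. \<Sum>g\<in>PiE S (\<lambda>_. Y).
        if \<forall>j\<in>J. card {i\<in>S. R i (g i) j} + (if R i0 a j then 1 else 0) = m j
        then q i0 a * (\<Prod>i\<in>S. q i (g i)) else 0)"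
    by (subst sum_PiE_insert[OF assms(2)]) (simp only: card_upd prod_upd)
  finally show ?thesis
    by (simp add: sum_distrib_left if_distrib[of "\<lambda>x. q i0 _ * x"] cong: if_cong)
qed

text \<open>Probabilistic reading: the sites \<open>i \<in> S\<close> are independent, \<open>q i\<close> is the law of site \<open>i\<close>
  on \<open>Y\<close>, and \<open>R i a j\<close> says that state \<open>a\<close> of site \<open>i\<close> lies in class \<open>j\<close>.\<close>
lemma sum_PiE_class_counts_eq_multinomial_prob:
  fixes q :: "'i \<Rightarrow> 'a \<Rightarrow> real" and R :: "'i \<Rightarrow> 'a \<Rightarrow> 'j \<Rightarrow> bool"
  assumes "finite S" "finite Y" "finite J"
    and unique: "\<And>i a j j'. R i a j \<Longrightarrow> R i a j' \<Longrightarrow> j = j'"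
    and total: "\<And>i. i \<in> S \<Longrightarrow> (\<Sum>a\<in>Y. q i a) = 1"
    and class_prob: "\<And>i j. i \<in> S \<Longrightarrow> j \<in> J \<Longrightarrow> (\<Sum>a\<in>{a\<in>Y. R i a j}. q i a) = p j"
  shows "(\<Sum>g\<in>{g\<in>PiE S (\<lambda>_. Y). \<forall>j\<in>J. card {i\<in>S. R i (g i) j} = m j}. \<Prod>i\<in>S. q i (g i))
       = multinomial_prob J p (card S) m"
  using assms(1) total class_prob
proof (induction S arbitrary: m rule: finite_induct)
  case empty
  then show ?case
    using assms(3) by (simp add: multinomial_prob_0)
next
  case (insert i0 S)
  define rest where "rest a = (\<Sum>g\<in>PiE S (\<lambda>_. Y).
      if \<forall>j\<in>J. card {i\<in>S. R i (g i) j} + (if R i0 a j then 1 else 0) = m j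
      then \<Prod>i\<in>S. q i (g i) else 0)" for a
  have IH: "(\<Sum>g\<in>PiE S (\<lambda>_. Y). if \<forall>j\<in>J. card {i\<in>S. R i (g i) j} = m' j then \<Prod>i\<in>S. q i (g i) else 0)
      = multinomial_prob J p (card S) m'" for m'
    using insert.IH[of m'] insert.prems finite_PiE[OF insert.hyps(1), of "\<lambda>_. Y"] assms(2)
    by (simp add: sum.inter_filter)
  have rest_miss: "rest a = multinomial_prob J p (card S) m" if "\<forall>j\<in>J. \<not> R i0 a j" for a
    unfolding rest_def IH[symmetric] using that by (intro sum.cong) auto
  have rest_hit: "rest a = (if m j0 = 0 then 0 else multinomial_prob J p (card S) (m(j0 := m j0 - 1)))"
    if "j0 \<in> J" "R i0 a j0" for a j0
  proof -
    have hit_j0: "(if R i0 a j then 1 else 0) = (if j = j0 then 1 else 0 :: nat)" for j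
      using that unique by auto
    have "(\<forall>j\<in>J. c j + (if R i0 a j then 1 else 0) = m j) \<longleftrightarrow>
        m j0 \<noteq> 0 \<and> (\<forall>j\<in>J. c j = (m(j0 := m j0 - 1)) j)" for c :: "'j \<Rightarrow> nat"
      unfolding hit_j0 using that(1) by (auto split: if_splits)
    then show ?thesis
      unfolding rest_def IH[symmetric] by (simp cong: if_cong)
  qed
  have "(\<Sum>a\<in>Y. q i0 a) = (\<Sum>a\<in>{a\<in>Y. \<forall>j\<in>J. \<not> R i0 a j}. q i0 a) + (\<Sum>j\<in>J. \<Sum>a\<in>{a\<in>Y. R i0 a j}. q i0 a)"
    using assms(2,3) unique by (rule sum_split_by_unique_class)
  then have miss_prob: "(\<Sum>a\<in>{a\<in>Y. \<forall>j\<in>J. \<not> R i0 a j}. q i0 a) = 1 - sum p J"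
    using insert.prems by simp
  have miss: "(\<Sum>a\<in>{a\<in>Y. \<forall>j\<in>J. \<not> R i0 a j}. q i0 a * rest a) = (1 - sum p J) * multinomial_prob J p (card S) m"
    unfolding miss_prob[symmetric] sum_distrib_right using rest_miss by (intro sum.cong) auto
  have hit: "(\<Sum>a\<in>{a\<in>Y. R i0 a j}. q i0 a * rest a) =
      p j * (if m j = 0 then 0 else multinomial_prob J p (card S) (m(j := m j - 1)))" if "j \<in> J" for j
    unfolding insert.prems(2)[OF insertI1 that, symmetric] sum_distrib_right
    using rest_hit that by (intro sum.cong) auto
  have "(\<Sum>g\<in>{g\<in>PiE (insert i0 S) (\<lambda>_. Y). \<forall>j\<in>J. card {i\<in>insert i0 S. R i (g i) j} = m j}.
          \<Prod>i\<in>insert i0 S. q i (g i)) = (\<Sum>a\<in>Y. q i0 a * rest a)"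
    unfolding rest_def using insert.hyps assms(2) by (rule sum_PiE_insert_class_counts)
  also have "\<dots> = (\<Sum>a\<in>{a\<in>Y. \<forall>j\<in>J. \<not> R i0 a j}. q i0 a * rest a) + (\<Sum>j\<in>J. \<Sum>a\<in>{a\<in>Y. R i0 a j}. q i0 a * rest a)"
    using assms(2,3) unique by (rule sum_split_by_unique_class)
  also have "\<dots> = (1 - sum p J) * multinomial_prob J p (card S) m +
      (\<Sum>j\<in>J. p j * (if m j = 0 then 0 else multinomial_prob J p (card S) (m(j := m j - 1))))"
    using miss hit by simp
  also have "\<dots> = multinomial_prob J p (card (insert i0 S)) m"
    using insert.hyps assms(3) by (simp add: multinomial_prob_Suc if_distrib[of "\<lambda>x. p _ * x"] cong: if_cong)
  finally show ?case .
qed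

section \<open>Poisson limit of the multinomial distribution\<close>

lemma tendsto_one_minus_power_exp:
  fixes s :: "nat \<Rightarrow> real" and N :: "nat \<Rightarrow> nat"
  assumes s: "s \<longlonglongrightarrow> 0" and Ns: "(\<lambda>n. real (N n) * s n) \<longlonglongrightarrow> c" and nonneg: "\<And>n. 0 \<le> s n"
  shows "(\<lambda>n. (1 - s n) ^ N n) \<longlonglongrightarrow> exp (- c)"
proof -
  have small: "eventually (\<lambda>n. s n \<le> 1/2) sequentially"
    using s by (auto simp: tendsto_iff dist_real_def elim!: allE[of _ "1/2"] elim: eventually_mono)
  have "(\<lambda>n. real (N n) * ln (1 - s n)) \<longlonglongrightarrow> - c"
  proof (rule tendsto_sandwich)
    show "eventually (\<lambda>n. - (real (N n) * s n) - 2 * (real (N n) * s n * s n) \<le> real (N n) * ln (1 - s n)) sequentially"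
      using small
    proof (rule eventually_mono)
      fix n assume "s n \<le> 1/2"
      then have "- s n - 2 * (s n)\<^sup>2 \<le> ln (1 - s n)"
        using ln_one_minus_pos_lower_bound[OF nonneg] by simp
      then have "real (N n) * (- s n - 2 * (s n)\<^sup>2) \<le> real (N n) * ln (1 - s n)"
        by (intro mult_left_mono) auto
      then show "- (real (N n) * s n) - 2 * (real (N n) * s n * s n) \<le> real (N n) * ln (1 - s n)"
        by (simp add: algebra_simps power2_eq_square)
    qed
    show "eventually (\<lambda>n. real (N n) * ln (1 - s n) \<le> - (real (N n) * s n)) sequentially"
      using small
    proof (rule eventually_mono)
      fix n assume "s n \<le> 1/2"
      then have "ln (1 - s n) \<le> - s n"
        using ln_le_minus_one[of "1 - s n"] by simp
      then show "real (N n) * ln (1 - s n) \<le> - (real (N n) * s n)"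
        using mult_left_mono[of "ln (1 - s n)" "- s n" "real (N n)"] by simp
    qed
    show "(\<lambda>n. - (real (N n) * s n) - 2 * (real (N n) * s n * s n)) \<longlonglongrightarrow> - c"
      using tendsto_diff[OF tendsto_minus[OF Ns] tendsto_mult_left[OF tendsto_mult[OF Ns s], of 2]]
      by simp
    show "(\<lambda>n. - (real (N n) * s n)) \<longlonglongrightarrow> - c"
      by (intro tendsto_intros Ns)
  qed
  then have "(\<lambda>n. exp (real (N n) * ln (1 - s n))) \<longlonglongrightarrow> exp (- c)"
    by (rule tendsto_exp)
  moreover have "eventually (\<lambda>n. exp (real (N n) * ln (1 - s n)) = (1 - s n) ^ N n) sequentially"
    using small by (rule eventually_mono) (simp add: ln_realpow[symmetric])
  ultimately show ?thesis
    by (rule Lim_transform_eventually)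
qed

lemma tendsto_one_minus_power_diff_exp:
  fixes s :: "nat \<Rightarrow> real" and N :: "nat \<Rightarrow> nat"
  assumes s: "s \<longlonglongrightarrow> 0" and Ns: "(\<lambda>n. real (N n) * s n) \<longlonglongrightarrow> c" and nonneg: "\<And>n. 0 \<le> s n"
  shows "(\<lambda>n. (1 - s n) ^ (N n - M)) \<longlonglongrightarrow> exp (- c)"
proof -
  have "(\<lambda>n. real (N n - M) * s n) \<longlonglongrightarrow> c"
  proof (rule tendsto_sandwich)
    have "real (N n) * s n - real M * s n \<le> real (N n - M) * s n" for n
    proof (cases "M \<le> N n")
      case False
      then have "(real (N n) - real M) * s n \<le> 0"
        using nonneg[of n] by (intro mult_nonpos_nonneg) auto
      then show ?thesis
        using False by (simp add: left_diff_distrib)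
    qed (simp add: of_nat_diff left_diff_distrib)
    then show "eventually (\<lambda>n. real (N n) * s n - real M * s n \<le> real (N n - M) * s n) sequentially"
      by simp
    show "eventually (\<lambda>n. real (N n - M) * s n \<le> real (N n) * s n) sequentially"
      using nonneg by (intro always_eventually allI mult_right_mono) auto
    show "(\<lambda>n. real (N n) * s n - real M * s n) \<longlonglongrightarrow> c"
      using tendsto_diff[OF Ns tendsto_mult_left[OF s, of "real M"]] by simp
  qed (rule Ns)
  with s nonneg show ?thesis
    by (intro tendsto_one_minus_power_exp)
qed

lemma prod_lessThan_add:
  fixes a b :: nat
  shows "(\<Prod>t<a + b. f t) = (\<Prod>t<a. f t) * (\<Prod>t<b. f (a + t))"
  by (induction b) (simp_all add: ac_simps)

text \<open>The offset \<open>d\<close> lets the induction over \<open>J\<close> peel off the factors belonging to one class.\<close>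
lemma tendsto_falling_prod_mult_prod_power:
  fixes p :: "nat \<Rightarrow> 'j \<Rightarrow> real" and N :: "nat \<Rightarrow> nat"
  assumes "finite J"
    and "\<And>j. j \<in> J \<Longrightarrow> (\<lambda>n. p n j) \<longlonglongrightarrow> 0"
    and "\<And>j. j \<in> J \<Longrightarrow> (\<lambda>n. real (N n) * p n j) \<longlonglongrightarrow> c j"
  shows "(\<lambda>n. (\<Prod>t<(\<Sum>j\<in>J. m j). real (N n) - real (d + t)) * (\<Prod>j\<in>J. p n j ^ m j))
           \<longlonglongrightarrow> (\<Prod>j\<in>J. c j ^ m j)"
  using assms
proof (induction J arbitrary: d rule: finite_induct)
  case (insert j J)
  define M where "M = (\<Sum>i\<in>J. m i)"
  have "(\<lambda>n. (real (N n) - real (d + M + t)) * p n j) \<longlonglongrightarrow> c j" for t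
  proof -
    have "(\<lambda>n. real (N n) * p n j - real (d + M + t) * p n j) \<longlonglongrightarrow> c j - real (d + M + t) * 0"
      using insert.prems by (intro tendsto_intros) auto
    then show ?thesis
      by (simp add: left_diff_distrib)
  qed
  then have new: "(\<lambda>n. \<Prod>t<m j. (real (N n) - real (d + M + t)) * p n j) \<longlonglongrightarrow> c j ^ m j"
    using tendsto_prod[of "{..<m j}" "\<lambda>t n. (real (N n) - real (d + M + t)) * p n j" "\<lambda>_. c j"]
    by simp
  have old: "(\<lambda>n. (\<Prod>t<M. real (N n) - real (d + t)) * (\<Prod>i\<in>J. p n i ^ m i)) \<longlonglongrightarrow> (\<Prod>i\<in>J. c i ^ m i)"
    unfolding M_def using insert.prems by (intro insert.IH) auto
  have eq: "(\<Prod>t<(\<Sum>i\<in>insert j J. m i). real (N n) - real (d + t)) * (\<Prod>i\<in>insert j J. p n i ^ m i)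
      = ((\<Prod>t<M. real (N n) - real (d + t)) * (\<Prod>i\<in>J. p n i ^ m i)) *
        (\<Prod>t<m j. (real (N n) - real (d + M + t)) * p n j)" for n
  proof -
    have sum_insert: "(\<Sum>i\<in>insert j J. m i) = M + m j"
      unfolding M_def using insert.hyps by simp
    have "(\<Prod>t<(\<Sum>i\<in>insert j J. m i). real (N n) - real (d + t)) * (\<Prod>i\<in>insert j J. p n i ^ m i)
        = (\<Prod>t<M. real (N n) - real (d + t)) * (\<Prod>t<m j. real (N n) - real (d + (M + t))) *
          (p n j ^ m j * (\<Prod>i\<in>J. p n i ^ m i))"
      by (simp only: sum_insert prod_lessThan_add prod.insert[OF insert.hyps])
    then show ?thesis
      by (simp add: prod.distrib ac_simps)
  qed
  have "(\<lambda>n. (\<Prod>t<(\<Sum>i\<in>insert j J. m i). real (N n) - real (d + t)) * (\<Prod>i\<in>insert j J. p n i ^ m i))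
      \<longlonglongrightarrow> (\<Prod>i\<in>J. c i ^ m i) * c j ^ m j"
    unfolding eq by (rule tendsto_mult[OF old new])
  then show ?case
    by (simp only: prod.insert[OF insert.hyps] mult.commute)
qed simp

lemma tendsto_multinomial_prob_poisson:
  fixes p :: "nat \<Rightarrow> 'j \<Rightarrow> real" and N :: "nat \<Rightarrow> nat"
  assumes J: "finite J"
    and p0: "\<And>j. j \<in> J \<Longrightarrow> (\<lambda>n. p n j) \<longlonglongrightarrow> 0"
    and Np: "\<And>j. j \<in> J \<Longrightarrow> (\<lambda>n. real (N n) * p n j) \<longlonglongrightarrow> c j"
    and nonneg: "\<And>n j. j \<in> J \<Longrightarrow> 0 \<le> p n j"
  shows "(\<lambda>n. multinomial_prob J (p n) (N n) m) \<longlonglongrightarrow> (\<Prod>j\<in>J. poisson_prob (c j) (m j))"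
proof -
  define M where "M = (\<Sum>j\<in>J. m j)"
  define s where "s n = sum (p n) J" for n
  have s_nonneg: "0 \<le> s n" for n
    unfolding s_def using nonneg by (simp add: sum_nonneg)
  have s0: "s \<longlonglongrightarrow> 0"
    unfolding s_def using tendsto_sum[of J "\<lambda>j n. p n j" "\<lambda>_. 0"] p0 by simp
  have Ns: "(\<lambda>n. real (N n) * s n) \<longlonglongrightarrow> sum c J"
    unfolding s_def sum_distrib_left using Np by (auto intro!: tendsto_sum)
  have rest: "(\<lambda>n. (1 - s n) ^ (N n - M)) \<longlonglongrightarrow> exp (- sum c J)"
    using s0 Ns s_nonneg by (rule tendsto_one_minus_power_diff_exp)
  have hits: "(\<lambda>n. (\<Prod>t<M. real (N n) - real t) * (\<Prod>j\<in>J. p n j ^ m j)) \<longlonglongrightarrow> (\<Prod>j\<in>J. c j ^ m j)"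
    using tendsto_falling_prod_mult_prod_power[OF J p0 Np, where m = m and d = 0] unfolding M_def by simp
  have "(\<lambda>n. (\<Prod>t<M. real (N n) - real t) * (\<Prod>j\<in>J. p n j ^ m j) / (\<Prod>j\<in>J. fact (m j)) * (1 - s n) ^ (N n - M))
      \<longlonglongrightarrow> (\<Prod>j\<in>J. c j ^ m j) / (\<Prod>j\<in>J. fact (m j)) * exp (- sum c J)"
    by (intro tendsto_intros hits rest) (simp add: J)
  moreover have "(\<Prod>t<M. real (N n) - real t) * (\<Prod>j\<in>J. p n j ^ m j) / (\<Prod>j\<in>J. fact (m j)) * (1 - s n) ^ (N n - M)
      = multinomial_prob J (p n) (N n) m" for n
    unfolding multinomial_prob_def M_def s_def by (simp add: prod_dividef)
  moreover have "(\<Prod>j\<in>J. c j ^ m j) / (\<Prod>j\<in>J. fact (m j)) * exp (- sum c J) = (\<Prod>j\<in>J. poisson_prob (c j) (m j))"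
    unfolding poisson_prob_def using J by (simp add: prod.distrib prod_dividef exp_sum flip: sum_negf)
  ultimately show ?thesis
    by simp
qed

section \<open>Markov chains indexed by a tree\<close>

text \<open>The vertices of the tree are \<open>0, \<dots>, K\<close> with root \<open>0\<close> and parent \<open>par j < j\<close>; a
  configuration labels them, and \<open>tree_weight P par K a\<close> is the probability of the labelling
  \<open>a\<close> when labels are passed from parent to child through the kernel \<open>P\<close>, given the root label.\<close>

definition tree_configs :: "nat \<Rightarrow> (nat \<Rightarrow> 'a) set" where
  "tree_configs K = PiE {..K} (\<lambda>_. UNIV)"

definition tree_weight :: "('a \<Rightarrow> 'a \<Rightarrow> real) \<Rightarrow> (nat \<Rightarrow> nat) \<Rightarrow> nat \<Rightarrow> (nat \<Rightarrow> 'a) \<Rightarrow> real" where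
  "tree_weight P par K a = (\<Prod>j\<in>{1..K}. P (a (par j)) (a j))"

lemma finite_tree_configs [simp]: "finite (tree_configs K :: (nat \<Rightarrow> 'a::finite) set)"
  unfolding tree_configs_def by (rule finite_PiE) auto

lemma sum_tree_configs_Suc:
  "(\<Sum>a\<in>tree_configs (Suc K). f a) = (\<Sum>y\<in>UNIV. \<Sum>a\<in>tree_configs K. f (a(Suc K := y)))"
  unfolding tree_configs_def atMost_Suc by (rule sum_PiE_insert) simp

lemma sum_tree_configs_0:
  "(\<Sum>a\<in>tree_configs 0. f a) = (\<Sum>y\<in>UNIV. f ((\<lambda>_. undefined)(0 := y)))"
proof -
  have configs_0: "tree_configs 0 = PiE (insert 0 {}) (\<lambda>_. UNIV)"
    unfolding tree_configs_def by auto
  show ?thesis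
    unfolding configs_0 by (subst sum_PiE_insert) (auto simp: fun_upd_def)
qed

lemma tree_weight_Suc_fun_upd:
  assumes par: "\<And>j. 1 \<le> j \<Longrightarrow> par j < j"
  shows "tree_weight P par (Suc K) (a(Suc K := y)) = tree_weight P par K a * P (a (par (Suc K))) y"
proof -
  have "(\<Prod>j\<in>{1..K}. P ((a(Suc K := y)) (par j)) ((a(Suc K := y)) j)) = (\<Prod>j\<in>{1..K}. P (a (par j)) (a j))"
  proof (intro prod.cong refl)
    fix j assume "j \<in> {1..K}"
    then have "par j \<noteq> Suc K" "j \<noteq> Suc K"
      using par[of j] by auto
    then show "P ((a(Suc K := y)) (par j)) ((a(Suc K := y)) j) = P (a (par j)) (a j)"
      by simp
  qed
  moreover have "{1..Suc K} = insert (Suc K) {1..K}" "par (Suc K) \<noteq> Suc K"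
    using par[of "Suc K"] by auto
  ultimately show ?thesis
    unfolding tree_weight_def by simp
qed

text \<open>Summing out the vertices above \<open>k\<close>, the largest first: it is a leaf since \<open>par j < j\<close>.\<close>
lemma sum_tree_weight_truncate:
  fixes P :: "'a::finite \<Rightarrow> 'a \<Rightarrow> real"
  assumes par: "\<And>j. 1 \<le> j \<Longrightarrow> par j < j" and stochastic: "\<And>x. sum (P x) UNIV = 1"
    and "k \<le> K" and local: "\<And>a a'. (\<And>j. j \<le> k \<Longrightarrow> a j = a' j) \<Longrightarrow> Q a \<longleftrightarrow> Q a'"
  shows "(\<Sum>a\<in>{a\<in>tree_configs K. Q a}. tree_weight P par K a) = (\<Sum>a\<in>{a\<in>tree_configs k. Q a}. tree_weight P par k a)"
  using \<open>k \<le> K\<close>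
proof (induction K)
  case (Suc K)
  show ?case
  proof (cases "k = Suc K")
    case False
    then have "k \<le> K"
      using Suc.prems by simp
    have "(\<Sum>a\<in>{a\<in>tree_configs (Suc K). Q a}. tree_weight P par (Suc K) a)
        = (\<Sum>y\<in>UNIV. \<Sum>a\<in>tree_configs K. if Q a then tree_weight P par K a * P (a (par (Suc K))) y else 0)"
      using local[of "_(Suc K := _)"] \<open>k \<le> K\<close>
      by (simp add: sum.inter_filter sum_tree_configs_Suc tree_weight_Suc_fun_upd[OF par] cong: if_cong)
    also have "\<dots> = (\<Sum>a\<in>tree_configs K. if Q a then tree_weight P par K a * sum (P (a (par (Suc K)))) UNIV else 0)"
      by (subst sum.swap) (intro sum.cong refl; simp add: sum_distrib_left)
    also have "\<dots> = (\<Sum>a\<in>{a\<in>tree_configs K. Q a}. tree_weight P par K a)"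
      by (simp only: stochastic mult_1_right) (simp add: sum.inter_filter)
    finally show ?thesis
      using Suc.IH[OF \<open>k \<le> K\<close>] by simp
  qed simp
qed simp

lemma sum_tree_weight_constant_prefix:
  fixes P :: "'a::finite \<Rightarrow> 'a \<Rightarrow> real"
  assumes par: "\<And>j. 1 \<le> j \<Longrightarrow> par j < j" and stochastic: "\<And>x. sum (P x) UNIV = 1" and "k \<le> K"
  shows "(\<Sum>a\<in>{a\<in>tree_configs K. \<forall>j\<le>k. a j = b}. tree_weight P par K a) = P b b ^ k"
proof -
  have "(\<Sum>a\<in>{a\<in>tree_configs K. \<forall>j\<le>k. a j = b}. tree_weight P par K a)
      = (\<Sum>a\<in>{a\<in>tree_configs k. \<forall>j\<le>k. a j = b}. tree_weight P par k a)"
    using \<open>k \<le> K\<close> by (intro sum_tree_weight_truncate[OF par stochastic]) auto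
  also have "\<dots> = P b b ^ k"
  proof (induction k)
    case 0
    show ?case
      unfolding sum.inter_filter[OF finite_tree_configs] by (simp add: sum_tree_configs_0 tree_weight_def)
  next
    case (Suc k)
    have "par (Suc k) \<le> k"
      using par[of "Suc k"] by simp
    then have pointwise: "(if \<forall>j\<le>Suc k. (a(Suc k := y)) j = b then tree_weight P par (Suc k) (a(Suc k := y)) else 0)
        = (if y = b then (if \<forall>j\<le>k. a j = b then tree_weight P par k a * P b b else 0) else 0)" for a y
      by (auto simp: le_Suc_eq tree_weight_Suc_fun_upd[OF par])
    have "(\<Sum>a\<in>{a\<in>tree_configs (Suc k). \<forall>j\<le>Suc k. a j = b}. tree_weight P par (Suc k) a)
        = (\<Sum>y\<in>UNIV. \<Sum>a\<in>tree_configs k.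
             if y = b then (if \<forall>j\<le>k. a j = b then tree_weight P par k a * P b b else 0) else 0)"
      unfolding sum.inter_filter[OF finite_tree_configs] sum_tree_configs_Suc pointwise ..
    also have "\<dots> = (\<Sum>a\<in>tree_configs k. if \<forall>j\<le>k. a j = b then tree_weight P par k a * P b b else 0)"
      by (subst sum.swap) (simp add: sum.delta)
    also have "\<dots> = (\<Sum>a\<in>{a\<in>tree_configs k. \<forall>j\<le>k. a j = b}. tree_weight P par k a) * P b b"
      by (simp add: sum.inter_filter sum_distrib_right if_distrib[of "\<lambda>x. x * _"] cong: if_cong)
    finally show ?case
      using Suc.IH by simp
  qed
  finally show ?thesis .
qed

definition first_change :: "'a \<Rightarrow> (nat \<Rightarrow> 'a) \<Rightarrow> nat \<Rightarrow> bool" where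
  "first_change b a k \<longleftrightarrow> a k \<noteq> b \<and> (\<forall>j<k. a j = b)"

lemma first_change_unique: "first_change b a j \<Longrightarrow> first_change b a j' \<Longrightarrow> j = j'"
  unfolding first_change_def by (metis linorder_neqE_nat)

lemma sum_tree_weight_first_change:
  fixes P :: "'a::finite \<Rightarrow> 'a \<Rightarrow> real"
  assumes par: "\<And>j. 1 \<le> j \<Longrightarrow> par j < j" and stochastic: "\<And>x. sum (P x) UNIV = 1"
    and "1 \<le> k" "k \<le> K"
  shows "(\<Sum>a\<in>{a\<in>tree_configs K. first_change b a k}. tree_weight P par K a) = P b b ^ (k - 1) * (1 - P b b)"
proof -
  obtain k' where k: "k = Suc k'"
    using \<open>1 \<le> k\<close> by (cases k) auto
  have "{a\<in>tree_configs K. first_change b a k} =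
      {a\<in>tree_configs K. \<forall>j\<le>k'. a j = b} - {a\<in>tree_configs K. \<forall>j\<le>Suc k'. a j = b}"
    unfolding k first_change_def by (auto simp: less_Suc_eq_le le_Suc_eq)
  then have "(\<Sum>a\<in>{a\<in>tree_configs K. first_change b a k}. tree_weight P par K a) = P b b ^ k' - P b b ^ Suc k'"
    using \<open>k \<le> K\<close> k
    by (simp add: sum_diff sum_tree_weight_constant_prefix[OF par stochastic] subset_iff)
  then show ?thesis
    unfolding k by (simp add: algebra_simps)
qed

lemma UNIV_nucleotide: "(UNIV :: nucleotide set) = {A, C, G, T}"
  using nucleotide.exhaust by auto

instance nucleotide :: finite
  by standard (simp add: UNIV_nucleotide)

lemma sum_trans_prob: "sum (trans_prob \<mu> x) UNIV = 1"
  unfolding UNIV_nucleotide by (cases x) (simp_all add: trans_prob_def)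

section \<open>The genome process along an admissible enumeration\<close>

definition enum_parent :: "(nat \<Rightarrow> bool list) \<Rightarrow> nat \<Rightarrow> nat" where
  "enum_parent e j = inv e (butlast (e j))"

lemma admissible_enum_inv:
  assumes "admissible_enum e"
  shows "e (inv e x) = x" "inv e (e j) = j"
  using assms unfolding admissible_enum_def by (auto simp: bij_def surj_f_inv_f)

lemma admissible_enum_root:
  assumes "admissible_enum e"
  shows "e 0 = []"
proof (rule ccontr)
  assume "e 0 \<noteq> []"
  then have "strict_prefix (e (inv e [])) (e 0)"
    using admissible_enum_inv[OF assms] by (simp add: strict_prefix_def)
  then have "inv e [] < 0"
    using assms unfolding admissible_enum_def by blast
  then show False
    by simp
qed

lemma admissible_enum_inv_pos:
  assumes "admissible_enum e" "x \<noteq> []"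
  shows "0 < inv e x"
proof (rule ccontr)
  assume "\<not> 0 < inv e x"
  then have "x = e 0"
    using admissible_enum_inv(1)[OF assms(1), of x] by simp
  with assms show False
    using admissible_enum_root by simp
qed

lemma strict_prefix_butlast: "xs \<noteq> [] \<Longrightarrow> strict_prefix (butlast xs) xs"
  by (cases xs rule: rev_cases) (auto simp: strict_prefix_def)

lemma admissible_enum_parent_less:
  assumes adm: "admissible_enum e" and "1 \<le> j"
  shows "enum_parent e j < j"
proof -
  have "e j \<noteq> e 0"
    using adm \<open>1 \<le> j\<close> admissible_enum_inv(2)[OF adm] by (metis not_one_le_zero)
  then have "strict_prefix (e (enum_parent e j)) (e j)"
    unfolding enum_parent_def admissible_enum_inv(1)[OF adm] admissible_enum_root[OF adm]
    by (rule strict_prefix_butlast)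
  then show ?thesis
    using adm unfolding admissible_enum_def by blast
qed

lemma prefix_closed_admissible_enum_image:
  assumes "admissible_enum e"
  shows "prefix_closed (e ` {..K})"
  unfolding prefix_closed_def
proof (intro ballI allI impI)
  fix x y assume "x \<in> e ` {..K}" "prefix y x"
  then obtain j where j: "j \<le> K" "x = e j"
    by auto
  have "inv e y \<le> j"
  proof (cases "y = x")
    case False
    then have "strict_prefix (e (inv e y)) (e j)"
      using \<open>prefix y x\<close> j admissible_enum_inv[OF assms] by (simp add: strict_prefix_def)
    then show ?thesis
      using assms unfolding admissible_enum_def by (blast intro: less_imp_le)
  qed (simp add: j admissible_enum_inv[OF assms])
  then show "y \<in> e ` {..K}"
    using j admissible_enum_inv[OF assms] by (metis atMost_iff image_eqI le_trans)
qed

definition genome_cylinder ::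
  "'w measure \<Rightarrow> (bool list \<Rightarrow> 'w \<Rightarrow> 's \<Rightarrow> nucleotide) \<Rightarrow> (nat \<Rightarrow> bool list) \<Rightarrow> 's set \<Rightarrow> nat
     \<Rightarrow> ('s \<Rightarrow> nat \<Rightarrow> nucleotide) \<Rightarrow> 'w set" where
  "genome_cylinder M V e S K g = {\<omega>\<in>space M. \<forall>i\<in>S. \<forall>j\<le>K. V (e j) \<omega> i = g i j}"

lemma measure_genome_cylinder:
  assumes gp: "genome_process M \<mu> S u V" and adm: "admissible_enum e" and "finite S"
  shows "measure M (genome_cylinder M V e S K g)
       = (\<Prod>i\<in>S. if g i 0 = u i then tree_weight (trans_prob \<mu>) (enum_parent e) K (g i) else 0)"
proof -
  note inv_e = admissible_enum_inv[OF adm]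
  have law: "\<And>F w. finite F \<Longrightarrow> [] \<in> F \<Longrightarrow> prefix_closed F \<Longrightarrow>
      measure M {\<omega>\<in>space M. \<forall>x\<in>F. \<forall>i\<in>S. V x \<omega> i = w x i} =
        (if \<forall>i\<in>S. w [] i = u i then 1 else 0) *
        (\<Prod>x\<in>F - {[]}. \<Prod>i\<in>S. trans_prob \<mu> (w (butlast x) i) (w x i))"
    using gp unfolding genome_process_def by blast
  define F where "F = e ` {..K}"
  have F: "finite F" "[] \<in> F" "prefix_closed F"
    unfolding F_def using admissible_enum_root[OF adm] prefix_closed_admissible_enum_image[OF adm]
    by (auto intro: image_eqI[of _ _ 0])
  have "genome_cylinder M V e S K g = {\<omega>\<in>space M. \<forall>x\<in>F. \<forall>i\<in>S. V x \<omega> i = g i (inv e x)}"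
    unfolding genome_cylinder_def F_def using inv_e by auto
  also have "measure M \<dots> = (if \<forall>i\<in>S. g i (inv e []) = u i then 1 else 0) *
      (\<Prod>x\<in>F - {[]}. \<Prod>i\<in>S. trans_prob \<mu> (g i (inv e (butlast x))) (g i (inv e x)))"
    by (rule law[OF F])
  also have "(\<Prod>x\<in>F - {[]}. \<Prod>i\<in>S. trans_prob \<mu> (g i (inv e (butlast x))) (g i (inv e x)))
      = (\<Prod>i\<in>S. tree_weight (trans_prob \<mu>) (enum_parent e) K (g i))"
  proof -
    have inj: "inj e"
      using adm unfolding admissible_enum_def by (simp add: bij_is_inj)
    have "F - {[]} = e ` ({..K} - {0})"
      unfolding F_def image_set_diff[OF inj] using admissible_enum_root[OF adm] by simp
    also have "{..K} - {0} = {1..K}"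
      by auto
    finally have "F - {[]} = e ` {1..K}" .
    moreover have "inj_on e {1..K}"
      using inj by (rule inj_on_subset) simp
    ultimately show ?thesis
      unfolding tree_weight_def enum_parent_def by (simp add: prod.reindex inv_e prod.swap[of _ S])
  qed
  also have "inv e [] = 0"
    using inv_e admissible_enum_root[OF adm] by metis
  finally show ?thesis
    using \<open>finite S\<close> by (cases "\<forall>i\<in>S. g i 0 = u i") (auto intro!: prod.cong)
qed

lemma first_mut_iff_first_change:
  assumes adm: "admissible_enum e" and cyl: "\<And>j. j \<le> K \<Longrightarrow> V (e j) \<omega> i = a j" and "inv e x \<le> K"
  shows "first_mut e V u i x \<omega> \<longleftrightarrow> first_change (u i) a (inv e x)"
proof -
  note inv_e = admissible_enum_inv[OF adm]
  have "first_mut e V u i x \<omega> \<longleftrightarrow> V (e (inv e x)) \<omega> i \<noteq> u i \<and> (\<forall>j<inv e x. V (e j) \<omega> i = u i)"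
    unfolding first_mut_def by (auto simp: inv_e intro!: exI[of _ "inv e x"])
  also have "\<dots> \<longleftrightarrow> first_change (u i) a (inv e x)"
    unfolding first_change_def using cyl \<open>inv e x \<le> K\<close> by auto
  finally show ?thesis .
qed

lemma mut_count_on_genome_cylinder:
  assumes adm: "admissible_enum e" and "\<omega> \<in> genome_cylinder M V e S K g" and "inv e x \<le> K"
  shows "mut_count e S V u x \<omega> = card {i\<in>S. first_change (u i) (g i) (inv e x)}"
proof -
  have "first_mut e V u i x \<omega> \<longleftrightarrow> first_change (u i) (g i) (inv e x)" if "i \<in> S" for i
    using assms that by (intro first_mut_iff_first_change[OF adm, of K]) (auto simp: genome_cylinder_def)
  then show ?thesis
    unfolding mut_count_def by (intro arg_cong[where f = card] Collect_cong) auto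
qed

lemma mut_count_event_eq_Union_genome_cylinders:
  assumes adm: "admissible_enum e" and XK: "inv e ` X \<subseteq> {..K}"
  shows "{\<omega>\<in>space M. \<forall>x\<in>X. mut_count e S V u x \<omega> = m x} =
    (\<Union>g\<in>{g\<in>PiE S (\<lambda>_. tree_configs K). \<forall>j\<in>inv e ` X. card {i\<in>S. first_change (u i) (g i) j} = m (e j)}.
       genome_cylinder M V e S K g)"
    (is "?event = (\<Union>g\<in>?good. _)")
proof (intro equalityI subsetI)
  note inv_e = admissible_enum_inv[OF adm]
  note count = mut_count_on_genome_cylinder[OF adm]
  fix \<omega> assume \<omega>: "\<omega> \<in> ?event"
  define g where "g = restrict (\<lambda>i. restrict (\<lambda>j. V (e j) \<omega> i) {..K}) S"
  have cyl: "\<omega> \<in> genome_cylinder M V e S K g"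
    using \<omega> unfolding genome_cylinder_def g_def by auto
  have "card {i\<in>S. first_change (u i) (g i) (inv e x)} = m x" if "x \<in> X" for x
    using \<omega> XK that count[OF cyl, of x u] by auto
  moreover have "g \<in> PiE S (\<lambda>_. tree_configs K)"
    unfolding g_def tree_configs_def by auto
  ultimately have "g \<in> ?good"
    by (auto simp: inv_e)
  with cyl show "\<omega> \<in> (\<Union>g\<in>?good. genome_cylinder M V e S K g)"
    by blast
next
  note inv_e = admissible_enum_inv[OF adm]
  note count = mut_count_on_genome_cylinder[OF adm]
  fix \<omega> assume "\<omega> \<in> (\<Union>g\<in>?good. genome_cylinder M V e S K g)"
  then obtain g where "g \<in> ?good" "\<omega> \<in> genome_cylinder M V e S K g"
    by blast
  then show "\<omega> \<in> ?event"
    using XK count[OF \<open>\<omega> \<in> genome_cylinder M V e S K g\<close>] by (auto simp: genome_cylinder_def inv_e)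
qed

lemma genome_cylinder_in_sets:
  assumes "genome_process M \<mu> S u V" "finite S"
  shows "genome_cylinder M V e S K g \<in> sets M"
proof -
  have "Measurable.pred M (\<lambda>\<omega>. \<forall>i\<in>S. \<forall>j\<in>{..K}. V (e j) \<omega> i = g i j)"
    using assms unfolding genome_process_def by (intro pred_intros_finite pred_count_space_const1) auto
  moreover have "genome_cylinder M V e S K g = {\<omega>\<in>space M. \<forall>i\<in>S. \<forall>j\<in>{..K}. V (e j) \<omega> i = g i j}"
    unfolding genome_cylinder_def by auto
  ultimately show ?thesis
    unfolding pred_def by simp
qed

lemma disjoint_family_on_genome_cylinder:
  fixes V :: "bool list \<Rightarrow> 'w \<Rightarrow> 's \<Rightarrow> nucleotide"
  shows "disjoint_family_on (genome_cylinder M V e S K) (PiE S (\<lambda>_. tree_configs K))"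
  unfolding disjoint_family_on_def
proof (intro ballI impI)
  fix g g' :: "'s \<Rightarrow> nat \<Rightarrow> nucleotide"
  assume g: "g \<in> PiE S (\<lambda>_. tree_configs K)" and g': "g' \<in> PiE S (\<lambda>_. tree_configs K)" and "g \<noteq> g'"
  have "\<exists>i\<in>S. \<exists>j\<le>K. g i j \<noteq> g' i j"
  proof (rule ccontr)
    assume same: "\<not> ?thesis"
    have "g i = g' i" if "i \<in> S" for i
    proof (rule PiE_ext)
      show "g i \<in> PiE {..K} (\<lambda>_. UNIV)" "g' i \<in> PiE {..K} (\<lambda>_. UNIV)"
        using that g g' unfolding tree_configs_def by auto
    qed (use same that in auto)
    with g g' \<open>g \<noteq> g'\<close> show False
      by (auto intro: PiE_ext)
  qed
  then show "genome_cylinder M V e S K g \<inter> genome_cylinder M V e S K g' = {}"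
    unfolding genome_cylinder_def by auto
qed

lemma measure_mut_count_event:
  fixes M :: "'w measure" and V :: "bool list \<Rightarrow> 'w \<Rightarrow> 's \<Rightarrow> nucleotide"
  assumes gp: "genome_process M \<mu> S u V" and adm: "admissible_enum e" and S: "finite S"
    and XK: "inv e ` X \<subseteq> {..K}"
  shows "measure M {\<omega>\<in>space M. \<forall>x\<in>X. mut_count e S V u x \<omega> = m x}
       = (\<Sum>g\<in>{g\<in>PiE S (\<lambda>_. tree_configs K). \<forall>j\<in>inv e ` X. card {i\<in>S. first_change (u i) (g i) j} = m (e j)}.
            \<Prod>i\<in>S. if g i 0 = u i then tree_weight (trans_prob \<mu>) (enum_parent e) K (g i) else 0)"
    (is "_ = (\<Sum>g\<in>?good. _)")
proof -
  interpret prob_space M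
    using gp unfolding genome_process_def by blast
  have good: "?good \<subseteq> PiE S (\<lambda>_. tree_configs K)"
    by blast
  then have "finite ?good"
    by (rule finite_subset) (simp add: finite_PiE S)
  moreover have "disjoint_family_on (genome_cylinder M V e S K) ?good"
    using good by (rule disjoint_family_on_mono) (rule disjoint_family_on_genome_cylinder)
  ultimately have "measure M (\<Union>g\<in>?good. genome_cylinder M V e S K g) =
      (\<Sum>g\<in>?good. measure M (genome_cylinder M V e S K g))"
    using genome_cylinder_in_sets[OF gp S] by (intro finite_measure_finite_Union) auto
  then show ?thesis
    unfolding mut_count_event_eq_Union_genome_cylinders[OF adm XK] measure_genome_cylinder[OF gp adm S] .
qed

lemma measure_mut_count_eq_multinomial_prob:
  fixes M :: "'w measure" and V :: "bool list \<Rightarrow> 'w \<Rightarrow> 's \<Rightarrow> nucleotide"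
  assumes gp: "genome_process M \<mu> S u V" and adm: "admissible_enum e" and S: "finite S"
    and X: "finite X" "[] \<notin> X"
  shows "measure M {\<omega>\<in>space M. \<forall>x\<in>X. mut_count e S V u x \<omega> = m x}
       = multinomial_prob (inv e ` X) (\<lambda>j. (1 - \<mu>) ^ (j - 1) * \<mu>) (card S) (\<lambda>j. m (e j))"
proof -
  note inv_e = admissible_enum_inv[OF adm]
  note par = admissible_enum_parent_less[OF adm]
  define J where "J = inv e ` X"
  define K where "K = Max (insert 0 J)"
  define w where "w = tree_weight (trans_prob \<mu>) (enum_parent e) K"
  have J: "finite J"
    unfolding J_def using X by simp
  have JK: "J \<subseteq> {1..K}"
  proof
    fix j assume "j \<in> J"
    then obtain x where "x \<in> X" "j = inv e x"
      unfolding J_def by blast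
    then have "0 < j"
      using X(2) by (auto intro: admissible_enum_inv_pos[OF adm])
    moreover have "j \<le> K"
      unfolding K_def using J \<open>j \<in> J\<close> by simp
    ultimately show "j \<in> {1..K}"
      by simp
  qed
  have "measure M {\<omega>\<in>space M. \<forall>x\<in>X. mut_count e S V u x \<omega> = m x}
      = (\<Sum>g\<in>{g\<in>PiE S (\<lambda>_. tree_configs K). \<forall>j\<in>J. card {i\<in>S. first_change (u i) (g i) j} = m (e j)}.
            \<Prod>i\<in>S. if g i 0 = u i then w (g i) else 0)"
    unfolding J_def w_def using JK J_def by (intro measure_mut_count_event[OF gp adm S]) auto
  also have "\<dots> = multinomial_prob J (\<lambda>j. (1 - \<mu>) ^ (j - 1) * \<mu>) (card S) (\<lambda>j. m (e j))"
  proof (rule sum_PiE_class_counts_eq_multinomial_prob[OF S finite_tree_configs J first_change_unique])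
    fix i
    have "(\<Sum>a\<in>tree_configs K. if a 0 = u i then w a else 0) = (\<Sum>a\<in>{a\<in>tree_configs K. \<forall>j\<le>0. a j = u i}. w a)"
      by (simp add: sum.inter_filter)
    also have "\<dots> = 1"
      unfolding w_def using sum_tree_weight_constant_prefix[OF par sum_trans_prob, of 0 K] by simp
    finally show "(\<Sum>a\<in>tree_configs K. if a 0 = u i then w a else 0) = 1" .
  next
    fix i j assume "j \<in> J"
    then have "1 \<le> j" "j \<le> K"
      using JK by auto
    then have "(\<Sum>a\<in>{a\<in>tree_configs K. first_change (u i) a j}. if a 0 = u i then w a else 0)
        = (\<Sum>a\<in>{a\<in>tree_configs K. first_change (u i) a j}. w a)"
      by (intro sum.cong) (auto simp: first_change_def)
    also have "\<dots> = (1 - \<mu>) ^ (j - 1) * \<mu>"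
      unfolding w_def using sum_tree_weight_first_change[OF par sum_trans_prob \<open>1 \<le> j\<close> \<open>j \<le> K\<close>]
      by (simp add: trans_prob_def)
    finally show "(\<Sum>a\<in>{a\<in>tree_configs K. first_change (u i) a j}. if a 0 = u i then w a else 0)
        = (1 - \<mu>) ^ (j - 1) * \<mu>" .
  qed
  finally show ?thesis
    unfolding J_def .
qed

theorem mainTheorem12:
  fixes e :: "nat \<Rightarrow> bool list"
    and \<mu> :: "nat \<Rightarrow> real" and \<eta> :: real
    and S :: "nat \<Rightarrow> 's set" and u :: "nat \<Rightarrow> 's \<Rightarrow> nucleotide"
    and M :: "nat \<Rightarrow> 'w measure"
    and V :: "nat \<Rightarrow> bool list \<Rightarrow> 'w \<Rightarrow> 's \<Rightarrow> nucleotide"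
  assumes "admissible_enum e"
    and "\<And>n. 0 < \<mu> n \<and> \<mu> n \<le> 1"
    and "\<And>n. finite (S n)"
    and "\<And>n. genome_process (M n) (\<mu> n) (S n) (u n) (V n)"
    and "\<mu> \<longlonglongrightarrow> 0"
    and "(\<lambda>n. real (card (S n)) * \<mu> n) \<longlonglongrightarrow> \<eta>"
    and "0 \<le> \<eta>"
  shows "\<And>X m. finite X \<Longrightarrow> [] \<notin> X \<Longrightarrow>
     (\<lambda>n. measure (M n) {\<omega>\<in>space (M n). \<forall>x\<in>X. mut_count e (S n) (V n) (u n) x \<omega> = m x})
       \<longlonglongrightarrow> (\<Prod>x\<in>X. poisson_prob \<eta> (m x))"
proof -
  fix X :: "bool list set" and m :: "bool list \<Rightarrow> nat"
  assume X: "finite X" "[] \<notin> X"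
  have "(\<lambda>n. multinomial_prob (inv e ` X) (\<lambda>j. (1 - \<mu> n) ^ (j - 1) * \<mu> n) (card (S n)) (\<lambda>j. m (e j)))
      \<longlonglongrightarrow> (\<Prod>j\<in>inv e ` X. poisson_prob \<eta> (m (e j)))"
  proof (rule tendsto_multinomial_prob_poisson)
    fix j
    show "(\<lambda>n. (1 - \<mu> n) ^ (j - 1) * \<mu> n) \<longlonglongrightarrow> 0"
      using tendsto_mult[OF tendsto_power[OF tendsto_diff[OF tendsto_const assms(5)]] assms(5)] by simp
    show "(\<lambda>n. real (card (S n)) * ((1 - \<mu> n) ^ (j - 1) * \<mu> n)) \<longlonglongrightarrow> \<eta>"
      using tendsto_mult[OF tendsto_power[OF tendsto_diff[OF tendsto_const assms(5)]] assms(6), of 1 "j - 1"]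
      by (simp add: ac_simps)
    show "0 \<le> (1 - \<mu> n) ^ (j - 1) * \<mu> n" for n
      using assms(2)[of n] by simp
  qed (use X in simp)
  moreover have "inj_on (inv e) X"
    using admissible_enum_inv[OF assms(1)] by (metis inj_onI)
  ultimately show "(\<lambda>n. measure (M n) {\<omega>\<in>space (M n). \<forall>x\<in>X. mut_count e (S n) (V n) (u n) x \<omega> = m x})
       \<longlonglongrightarrow> (\<Prod>x\<in>X. poisson_prob \<eta> (m x))"
    using X by (simp add: measure_mut_count_eq_multinomial_prob[OF assms(4,1,3)] prod.reindex
        admissible_enum_inv[OF assms(1)])
qed

end
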